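(* Let $E$ be a Banach $f$-algebra with order continuous norm and with a multiplicative unit $e$, and let $(x_n)$ be a decreasing sequence in $E$. Then $x_n\xrightarrow{mw}0$ if and only if $|x_n|(u\wedge e)\to0$ weakly for every $u\in E_+$.
   Context: All vector lattices are real and Archimedean. An $f$-algebra is a vector lattice with an associative multiplication making it an algebra, such that products of positive elements are positive and $x\wedge y=0$ implies $(xz)\wedge y=(zx)\wedge y=0$ for all $z\ge0$. A Banach $f$-algebra is an $f$-algebra which is a Banach lattice with $\|xy\|\le\|x\|\|y\|$. A net $(x_\alpha)$ in $E$ $mw$-converges to $x$ ($x_\alpha\xrightarrow{mw}x$) if $|x_\alpha-x|u\to0$ weakly for every $u\in E_+$. *)

theory Defs
  imports "HOL-Analysis.Analysis"
begin

definition lat_abs :: "'a::{lattice, ab_group_add} \<Rightarrow> 'a" where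
  "lat_abs x = sup x (- x)"

definition banach_lattice_norm :: "'a::{real_normed_vector, ordered_real_vector, lattice} itself \<Rightarrow> bool" where
  "banach_lattice_norm (_::'a itself) \<longleftrightarrow>
     (\<forall>x y::'a. lat_abs x \<le> lat_abs y \<longrightarrow> norm x \<le> norm y)"

(* f-algebra axioms (the algebra structure, associativity, is given by the ring sort). *)
definition f_algebra :: "'a::{real_algebra, ordered_real_vector, lattice} itself \<Rightarrow> bool" where
  "f_algebra (_::'a itself) \<longleftrightarrow>
     (\<forall>x y::'a. 0 \<le> x \<longrightarrow> 0 \<le> y \<longrightarrow> 0 \<le> x * y) \<and>
     (\<forall>x y z::'a. inf x y = 0 \<longrightarrow> 0 \<le> z \<longrightarrow> inf (x * z) y = 0 \<and> inf (z * x) y = 0)"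

definition is_infimum :: "'a::order set \<Rightarrow> 'a \<Rightarrow> bool" where
  "is_infimum D a \<longleftrightarrow> (\<forall>d\<in>D. a \<le> d) \<and> (\<forall>b. (\<forall>d\<in>D. b \<le> d) \<longrightarrow> b \<le> a)"

definition downward_directed :: "'a::order set \<Rightarrow> bool" where
  "downward_directed D \<longleftrightarrow> (\<forall>x\<in>D. \<forall>y\<in>D. \<exists>z\<in>D. z \<le> x \<and> z \<le> y)"

(* Order continuous norm: whenever D \<down> 0 (nonempty downward directed with infimum 0,
   i.e. a net decreasing to 0), inf { norm d | d \<in> D } = 0, i.e. norm x_\<alpha> \<rightarrow> 0. *)
definition order_continuous_norm :: "'a::{real_normed_vector, order} itself \<Rightarrow> bool" where
  "order_continuous_norm (_::'a itself) \<longleftrightarrow>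
     (\<forall>D::'a set. D \<noteq> {} \<and> downward_directed D \<and> is_infimum D 0 \<longrightarrow>
        (\<forall>\<epsilon>>0. \<exists>d\<in>D. norm d < \<epsilon>))"

definition weakly_tendsto :: "(nat \<Rightarrow> 'a::real_normed_vector) \<Rightarrow> 'a \<Rightarrow> bool" where
  "weakly_tendsto X x \<longleftrightarrow>
     (\<forall>f::'a \<Rightarrow> real. bounded_linear f \<longrightarrow> (\<lambda>n. f (X n)) \<longlonglongrightarrow> f x)"

definition mw_tendsto :: "(nat \<Rightarrow> 'a::{real_normed_algebra, lattice, ordered_real_vector}) \<Rightarrow> 'a \<Rightarrow> bool" where
  "mw_tendsto X x \<longleftrightarrow>
     (\<forall>u. 0 \<le> u \<longrightarrow> weakly_tendsto (\<lambda>n. lat_abs (X n - x) * u) 0)"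

end

theory Submission
  imports Defs
begin

text \<open>With a unit, mw-convergence to 0 reduces to weak convergence of the moduli:
  \<open>|x\<^sub>n| u \<rightarrow> 0\<close> weakly for all \<open>u \<ge> 0\<close> implies it for every \<open>u\<close> (split \<open>u\<close> into
  positive and negative part), in particular for \<open>inf u e\<close>; conversely \<open>u = |e|\<close> gives
  \<open>inf u e = e\<close>, so \<open>|x\<^sub>n| \<rightarrow> 0\<close> weakly, and right multiplication is a bounded operator.\<close>

lemma weakly_tendsto_mult_right:
  fixes X :: "nat \<Rightarrow> 'a::real_normed_algebra"
  assumes "weakly_tendsto X x"
  shows "weakly_tendsto (\<lambda>n. X n * u) (x * u)"
  unfolding weakly_tendsto_def
proof (intro allI impI)
  fix f :: "'a \<Rightarrow> real"
  assume "bounded_linear f"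
  then have "bounded_linear (\<lambda>y. f (y * u))"
    using bounded_linear_compose bounded_linear_mult_left by blast
  then show "(\<lambda>n. f (X n * u)) \<longlonglongrightarrow> f (x * u)"
    using assms unfolding weakly_tendsto_def by blast
qed

lemma weakly_tendsto_diff:
  fixes X Y :: "nat \<Rightarrow> 'a::real_normed_vector"
  assumes "weakly_tendsto X x" and "weakly_tendsto Y y"
  shows "weakly_tendsto (\<lambda>n. X n - Y n) (x - y)"
  unfolding weakly_tendsto_def
proof (intro allI impI)
  fix f :: "'a \<Rightarrow> real"
  assume f: "bounded_linear f"
  have "(\<lambda>n. f (X n) - f (Y n)) \<longlonglongrightarrow> f x - f y"
    using assms f unfolding weakly_tendsto_def by (intro tendsto_diff) auto
  then show "(\<lambda>n. f (X n - Y n)) \<longlonglongrightarrow> f (x - y)"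
    using f by (simp add: linear_diff[OF bounded_linear.linear])
qed

lemma lat_abs_nonneg:
  fixes a :: "'a::{ordered_real_vector, lattice}"
  shows "0 \<le> lat_abs a"
proof -
  have "a + - a \<le> lat_abs a + lat_abs a"
    unfolding lat_abs_def by (intro add_mono) auto
  then have "0 \<le> (2::real) *\<^sub>R lat_abs a"
    by (simp add: scaleR_2)
  then have "0 \<le> (1/2::real) *\<^sub>R ((2::real) *\<^sub>R lat_abs a)"
    by (rule scaleR_nonneg_nonneg[rotated]) simp
  also have "\<dots> = lat_abs a"
    by simp
  finally show ?thesis .
qed

lemma mw_tendsto_zero_mult:
  fixes X :: "nat \<Rightarrow> 'a::{real_normed_algebra, ordered_real_vector, lattice}"
  assumes "mw_tendsto X 0"
  shows "weakly_tendsto (\<lambda>n. lat_abs (X n) * v) 0"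
proof -
  have "0 \<le> sup v 0" and "0 \<le> sup v 0 - v"
    by auto
  then have "weakly_tendsto (\<lambda>n. lat_abs (X n) * sup v 0 - lat_abs (X n) * (sup v 0 - v)) (0 - 0)"
    using assms unfolding mw_tendsto_def by (intro weakly_tendsto_diff) auto
  then show ?thesis
    by (simp add: right_diff_distrib)
qed

lemma mw_tendsto_zero_iff_weakly_abs:
  fixes X :: "nat \<Rightarrow> 'a::{real_normed_algebra, ordered_real_vector, lattice}"
    and e :: 'a
  assumes unit: "\<And>y. y * e = y"
  shows "mw_tendsto X 0 \<longleftrightarrow> weakly_tendsto (\<lambda>n. lat_abs (X n)) 0"
proof
  assume "mw_tendsto X 0"
  then show "weakly_tendsto (\<lambda>n. lat_abs (X n)) 0"
    using mw_tendsto_zero_mult[of X e] by (simp add: unit)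
next
  assume "weakly_tendsto (\<lambda>n. lat_abs (X n)) 0"
  then show "mw_tendsto X 0"
    unfolding mw_tendsto_def using weakly_tendsto_mult_right by fastforce
qed

theorem theorem2p8:
  fixes x :: "nat \<Rightarrow> 'a::{real_normed_algebra, banach, ordered_real_vector, lattice}"
    and e :: 'a
  assumes "banach_lattice_norm TYPE('a)"
    and "f_algebra TYPE('a)"
    and "order_continuous_norm TYPE('a)"
    and "\<forall>y. e * y = y \<and> y * e = y"
    and "\<forall>n. x (Suc n) \<le> x n"
  shows "mw_tendsto x 0 \<longleftrightarrow>
         (\<forall>u. 0 \<le> u \<longrightarrow> weakly_tendsto (\<lambda>n. lat_abs (x n) * inf u e) 0)"
proof
  assume "mw_tendsto x 0"
  then show "\<forall>u. 0 \<le> u \<longrightarrow> weakly_tendsto (\<lambda>n. lat_abs (x n) * inf u e) 0"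
    using mw_tendsto_zero_mult by blast
next
  assume H: "\<forall>u. 0 \<le> u \<longrightarrow> weakly_tendsto (\<lambda>n. lat_abs (x n) * inf u e) 0"
  have "inf (lat_abs e) e = e"
    unfolding lat_abs_def by (simp add: inf_absorb2)
  then have "weakly_tendsto (\<lambda>n. lat_abs (x n) * e) 0"
    using H lat_abs_nonneg by metis
  then show "mw_tendsto x 0"
    using mw_tendsto_zero_iff_weakly_abs[of e x] assms(4) by simp
qed

end
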